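(* Let $N\ge2$, $I_1,\dots,I_N,R,M$ be positive integers, $I=I_1\cdots I_N$. For a positive integer $b$ define \[ W_{ub}(b)=I+(N+1)\Big(\prod_{k=1}^N\Big\lceil\frac{I_k}{b}\Big\rceil\Big)bR,\quad W_{lb1}=\frac{NIR}{3^{2-1/N}M^{1-1/N}}-M,\quad W_{lb2}=I+\sum_{k=1}^N I_kR-2M . \] Suppose there are constants $\alpha,\beta,\gamma,\delta,\epsilon>0$ with $\alpha<1$, $\beta<\alpha^{1-1/N}$, $\gamma>1+1/N$, $\delta<1+R\sum_k I_k/I$, $\epsilon<3^{-(2-1/N)}$, such that \[ M\ge\Big(\frac{N\alpha^{1/N}}{1-\alpha}\Big)^{\frac{N}{N-1}},\qquad M\ge\Big(\frac{1}{\alpha^{1/N}-\beta^{1/(N-1)}}\Big)^N, \] \[ M\le\Big(\frac{(\frac{N}{N+1}\gamma)^{1/N}-1}{\alpha^{1/N}}\min_{k}I_k\Big)^N,\quad M\le\tfrac12\Big((1-\delta)I+\sum_k I_kR\Big),\quad M\le\Big(\big(3^{-(2-1/N)}-\epsilon\big)NIR\Big)^{\frac{N}{2N-1}} . \] Let $b=\lfloor(\alpha M)^{1/N}\rfloor$. Then $b\ge1$, $b^N+Nb\le M$, and \[ W_{ub}(b)\le\frac{\gamma}{\beta}\Big(I+\frac{NIR}{M^{1-1/N}}\Big)\le \frac{2\gamma}{\beta\min(\delta,\epsilon)}\max(W_{lb1},W_{lb2}), \] with $\max(W_{lb1},W_{lb2})>0$.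
   Context: $W_{ub}(b)$ is the communication cost of the blocked sequential MTTKRP algorithm with block size $b$ (valid when $b^N+Nb\le M$), while $W_{lb1}$ and $W_{lb2}$ are lower bounds on the loads and stores of any sequential MTTKRP algorithm with fast memory size $M$; the claim is a statement purely about these quantities. *)

theory Defs
  imports Complex_Main
begin

definition tensor_size :: "nat \<Rightarrow> (nat \<Rightarrow> nat) \<Rightarrow> nat" where
  "tensor_size N Is = (\<Prod>k\<in>{1..N}. Is k)"

definition W_ub :: "nat \<Rightarrow> (nat \<Rightarrow> nat) \<Rightarrow> nat \<Rightarrow> nat \<Rightarrow> real" where
  "W_ub N Is R b = real (tensor_size N Is)
     + real (N + 1) * (\<Prod>k\<in>{1..N}. real_of_int \<lceil>real (Is k) / real b\<rceil>) * real b * real R"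

definition W_lb1 :: "nat \<Rightarrow> (nat \<Rightarrow> nat) \<Rightarrow> nat \<Rightarrow> nat \<Rightarrow> real" where
  "W_lb1 N Is R M = real N * real (tensor_size N Is) * real R
     / (3 powr (2 - 1 / real N) * real M powr (1 - 1 / real N)) - real M"

definition W_lb2 :: "nat \<Rightarrow> (nat \<Rightarrow> nat) \<Rightarrow> nat \<Rightarrow> nat \<Rightarrow> real" where
  "W_lb2 N Is R M = real (tensor_size N Is) + (\<Sum>k\<in>{1..N}. real (Is k) * real R) - 2 * real M"

end

theory Submission
  imports Defs
begin

text \<open>
  Write m = M^(1/N), a = \<alpha>^(1/N) and T = N I R / M^(1-1/N). The block size b = \<lfloor>a m\<rfloor>
  lies in (a m - 1, a m]. The first lower bound on M says N a / (1 - \<alpha>) \<le> m^(N-1), so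
  N b \<le> (1 - \<alpha>) M and b^N \<le> \<alpha> M; the second says (a - \<beta>^(1/(N-1))) m \<ge> 1, so
  b > \<beta>^(1/(N-1)) m, i.e. b^(N-1) \<ge> \<beta> M^(1-1/N). The first upper bound on M gives
  b \<le> (c - 1) I_k with c^N = N \<gamma> / (N + 1); then \<lceil>I_k / b\<rceil> \<le> c I_k / b and
  W_ub(b) \<le> I + N \<gamma> I R / b^(N-1) \<le> \<gamma>/\<beta> (I + T). The remaining upper bounds give
  W_lb2 \<ge> \<delta> I and W_lb1 \<ge> \<epsilon> T, whence I + T \<le> 2 max(\<delta> I, \<epsilon> T) / min(\<delta>, \<epsilon>).
\<close>

lemma powr_inverse_power:
  assumes "0 < n" "0 \<le> x"
  shows "(x powr (1 / real n)) ^ n = x"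
  using assms by (simp add: root_powr_inverse[symmetric])

lemma power_powr_inverse:
  assumes "0 < n" "0 \<le> x"
  shows "(x ^ n) powr (1 / real n) = x"
  using assms by (simp add: root_powr_inverse[symmetric] real_root_pos_unique)

lemma powr_inverse_power_pred:
  assumes "0 < n" "0 < x"
  shows "(x powr (1 / real n)) ^ (n - 1) = x powr (1 - 1 / real n)"
proof -
  have "(x powr (1 / real n)) ^ (n - 1) = x powr (real (n - 1) / real n)"
    using assms by (simp add: powr_realpow[symmetric] powr_powr)
  also have "real (n - 1) / real n = 1 - 1 / real n"
    using assms by (simp add: field_simps)
  finally show ?thesis .
qed

lemma powr_inverse_le_iff:
  fixes x y p :: real
  assumes "0 < p" "0 \<le> x" "0 \<le> y"
  shows "x powr (1 / p) \<le> y \<longleftrightarrow> x \<le> y powr p"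
proof
  assume "x powr (1 / p) \<le> y"
  then have "(x powr (1 / p)) powr p \<le> y powr p"
    using assms by (intro powr_mono2) auto
  then show "x \<le> y powr p"
    using assms by (simp add: powr_powr)
next
  assume "x \<le> y powr p"
  then have "x powr (1 / p) \<le> (y powr p) powr (1 / p)"
    using assms by (intro powr_mono2) auto
  then show "x powr (1 / p) \<le> y"
    using assms by (simp add: powr_powr)
qed

lemma le_powr_inverse_iff:
  fixes x y p :: real
  assumes "0 < p" "0 \<le> x" "0 \<le> y"
  shows "y \<le> x powr (1 / p) \<longleftrightarrow> y powr p \<le> x"
proof
  assume "y \<le> x powr (1 / p)"
  then have "y powr p \<le> (x powr (1 / p)) powr p"
    using assms by (intro powr_mono2) auto
  then show "y powr p \<le> x"
    using assms by (simp add: powr_powr)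
next
  assume "y powr p \<le> x"
  then have "(y powr p) powr (1 / p) \<le> x powr (1 / p)"
    using assms by (intro powr_mono2) auto
  then show "y \<le> x powr (1 / p)"
    using assms by (simp add: powr_powr)
qed

lemma ceiling_divide_le:
  fixes x b c :: real
  assumes "0 < b" "b \<le> (c - 1) * x"
  shows "real_of_int \<lceil>x / b\<rceil> \<le> c * x / b"
proof -
  have "real_of_int \<lceil>x / b\<rceil> \<le> (x + b) / b"
    using assms(1) by (simp add: add_divide_distrib)
  also have "\<dots> \<le> (x + (c - 1) * x) / b"
    using assms by (intro divide_right_mono) auto
  finally show ?thesis by (simp add: algebra_simps)
qed

lemma tensor_size_pos:
  assumes "\<And>k. k \<in> {1..N} \<Longrightarrow> 0 < Is k"
  shows "0 < tensor_size N Is"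
  using assms unfolding tensor_size_def by (intro prod_pos) auto

definition block_size :: "nat \<Rightarrow> real \<Rightarrow> nat \<Rightarrow> nat" where
  "block_size N \<alpha> M = nat \<lfloor>(\<alpha> * real M) powr (1 / real N)\<rfloor>"

lemma block_size_bounds:
  assumes "0 \<le> \<alpha>"
  shows "real (block_size N \<alpha> M) \<le> \<alpha> powr (1 / real N) * real M powr (1 / real N)"
    and "\<alpha> powr (1 / real N) * real M powr (1 / real N) - 1 < real (block_size N \<alpha> M)"
  using assms by (auto simp: block_size_def powr_mult)

lemma block_size_pow_add_le:
  assumes "2 \<le> N" "0 < \<alpha>" "\<alpha> < 1"
    and "(real N * \<alpha> powr (1 / real N) / (1 - \<alpha>)) powr (real N / (real N - 1)) \<le> real M"
  shows "block_size N \<alpha> M ^ N + N * block_size N \<alpha> M \<le> M"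
proof -
  define a m b where "a = \<alpha> powr (1 / real N)" and "m = real M powr (1 / real N)"
    and "b = real (block_size N \<alpha> M)"
  have ab: "b \<le> a * m" "0 \<le> b"
    using block_size_bounds(1)[of \<alpha>] assms(2) by (auto simp: a_def m_def b_def)
  have pos: "0 < real N * a / (1 - \<alpha>)" "0 < real N / (real N - 1)"
    using assms by (auto simp: a_def)
  then have M: "0 < real M"
    using assms(4) unfolding a_def by (smt (verit) powr_gt_zero)
  have "real N * a / (1 - \<alpha>) \<le> real M powr (1 / (real N / (real N - 1)))"
    using le_powr_inverse_iff[OF pos(2)] pos(1) assms(4) by (simp add: a_def)
  also have "1 / (real N / (real N - 1)) = 1 - 1 / real N"
    using assms(1) by (simp add: field_simps)
  also have "real M powr (1 - 1 / real N) = m ^ (N - 1)"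
    using powr_inverse_power_pred[of N "real M"] assms(1) M by (simp add: m_def)
  finally have "real N * a \<le> (1 - \<alpha>) * m ^ (N - 1)"
    using assms(3) by (simp add: pos_divide_le_eq mult.commute)
  then have "real N * a * m \<le> (1 - \<alpha>) * (m ^ (N - 1) * m)"
    using mult_right_mono[of _ _ m] by (metis m_def mult.assoc powr_ge_zero)
  also have "m ^ (N - 1) * m = real M"
    using assms(1) powr_inverse_power[of N "real M"] by (simp add: m_def power_Suc2[symmetric])
  finally have "real N * b \<le> (1 - \<alpha>) * real M"
    using ab mult_left_mono[of b "a * m" "real N"] by (simp add: mult.assoc)
  moreover have "b ^ N \<le> \<alpha> * real M"
  proof -
    have "b ^ N \<le> (a * m) ^ N"
      using ab by (intro power_mono) auto
    also have "\<dots> = \<alpha> * real M"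
      using assms M powr_inverse_power[of N] by (simp add: a_def m_def power_mult_distrib)
    finally show ?thesis .
  qed
  ultimately have "b ^ N + real N * b \<le> real M"
    by (simp add: algebra_simps)
  then show ?thesis
    unfolding b_def by (metis of_nat_add of_nat_le_iff of_nat_mult of_nat_power)
qed

lemma block_size_pow_pred_ge:
  assumes "2 \<le> N" "0 < \<alpha>" "0 < \<beta>" "\<beta> < \<alpha> powr (1 - 1 / real N)"
    and "(1 / (\<alpha> powr (1 / real N) - \<beta> powr (1 / (real N - 1)))) ^ N \<le> real M"
  shows "1 \<le> block_size N \<alpha> M"
    and "\<beta> * real M powr (1 - 1 / real N) \<le> real (block_size N \<alpha> M) ^ (N - 1)"
proof -
  define a m b \<beta>' where "a = \<alpha> powr (1 / real N)" and "m = real M powr (1 / real N)"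
    and "b = real (block_size N \<alpha> M)" and "\<beta>' = \<beta> powr (1 / (real N - 1))"
  have N: "real (N - 1) = real N - 1" "0 < N - 1"
    using assms(1) by auto
  have "\<beta>' < (\<alpha> powr (1 - 1 / real N)) powr (1 / (real N - 1))"
    unfolding \<beta>'_def using assms N by (intro powr_less_mono2) auto
  also have "\<dots> = a"
    using assms(1) by (simp add: a_def powr_powr field_simps)
  finally have "0 < a - \<beta>'" by simp
  have "1 / (a - \<beta>') = ((1 / (a - \<beta>')) ^ N) powr (1 / real N)"
    using power_powr_inverse[of N] assms(1) \<open>0 < a - \<beta>'\<close> by simp
  also have "\<dots> \<le> m"
    unfolding m_def using assms(5) \<open>0 < a - \<beta>'\<close>
    by (intro powr_mono2) (auto simp: a_def \<beta>'_def)
  finally have "1 \<le> (a - \<beta>') * m"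
    using \<open>0 < a - \<beta>'\<close> by (simp add: field_simps)
  moreover have "a * m - 1 < b"
    using block_size_bounds(2)[of \<alpha> N M] assms(2) by (simp add: a_def m_def b_def)
  ultimately have b_gt: "\<beta>' * m < b"
    by (simp add: left_diff_distrib)
  have "m \<noteq> 0"
    using \<open>1 \<le> (a - \<beta>') * m\<close> by auto
  then have M: "0 < M"
    by (simp add: m_def)
  then have "0 < \<beta>' * m"
    using assms(3) by (simp add: \<beta>'_def m_def)
  with b_gt show "1 \<le> block_size N \<alpha> M"
    unfolding b_def by linarith
  have "\<beta>' ^ (N - 1) = \<beta>"
    using powr_inverse_power[of "N - 1" \<beta>] N assms(3) by (simp add: \<beta>'_def)
  moreover have "m ^ (N - 1) = real M powr (1 - 1 / real N)"
    using powr_inverse_power_pred[of N "real M"] assms(1) M by (simp add: m_def)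
  ultimately have "\<beta> * real M powr (1 - 1 / real N) = (\<beta>' * m) ^ (N - 1)"
    by (simp add: power_mult_distrib)
  also have "\<dots> \<le> b ^ (N - 1)"
    using b_gt \<open>0 < \<beta>' * m\<close> by (intro power_mono) auto
  finally show "\<beta> * real M powr (1 - 1 / real N) \<le> real (block_size N \<alpha> M) ^ (N - 1)"
    unfolding b_def .
qed

lemma block_size_le_dim:
  assumes "0 < N" "0 < \<alpha>" "0 \<le> c" "0 \<le> \<mu>" "\<mu> \<le> x"
    and "real M \<le> (c / \<alpha> powr (1 / real N) * \<mu>) ^ N"
  shows "real (block_size N \<alpha> M) \<le> c * x"
proof -
  have "real M powr (1 / real N) \<le> ((c / \<alpha> powr (1 / real N) * \<mu>) ^ N) powr (1 / real N)"
    using assms(6) by (intro powr_mono2) auto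
  also have "\<dots> = c / \<alpha> powr (1 / real N) * \<mu>"
    using power_powr_inverse[of N] assms by simp
  finally have "\<alpha> powr (1 / real N) * real M powr (1 / real N) \<le> c * \<mu>"
    using assms(2) by (simp add: field_simps)
  also have "\<dots> \<le> c * x"
    using assms by (intro mult_left_mono) auto
  finally show ?thesis
    using block_size_bounds(1)[of \<alpha> N M] assms(2) by linarith
qed

lemma W_ub_le:
  assumes "0 < N" "0 < b" "\<And>k. k \<in> {1..N} \<Longrightarrow> real b \<le> (c - 1) * real (Is k)"
  shows "W_ub N Is R b \<le> real (tensor_size N Is)
           + real (N + 1) * c ^ N * real (tensor_size N Is) * real R / real b ^ (N - 1)"
proof -
  have "(\<Prod>k\<in>{1..N}. real_of_int \<lceil>real (Is k) / real b\<rceil>) \<le> (\<Prod>k\<in>{1..N}. c * real (Is k) / real b)"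
  proof (intro prod_mono conjI)
    fix k assume "k \<in> {1..N}"
    show "0 \<le> real_of_int \<lceil>real (Is k) / real b\<rceil>"
      using le_of_int_ceiling[of "real (Is k) / real b"] divide_nonneg_nonneg[of "real (Is k)" "real b"]
      by linarith
    show "real_of_int \<lceil>real (Is k) / real b\<rceil> \<le> c * real (Is k) / real b"
      using assms(2) ceiling_divide_le[OF _ assms(3)] \<open>k \<in> {1..N}\<close> by auto
  qed
  also have "\<dots> = c ^ N * real (tensor_size N Is) / real b ^ N"
    by (simp add: tensor_size_def prod.distrib prod_dividef power_divide)
  finally have "real (N + 1) * (\<Prod>k\<in>{1..N}. real_of_int \<lceil>real (Is k) / real b\<rceil>) * real b * real R
      \<le> real (N + 1) * (c ^ N * real (tensor_size N Is) / real b ^ N) * real b * real R"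
    by (intro mult_right_mono mult_left_mono) auto
  also have "\<dots> = real (N + 1) * c ^ N * real (tensor_size N Is) * real R / real b ^ (N - 1)"
    using assms(1,2) by (cases N) (auto simp: field_simps)
  finally show ?thesis
    unfolding W_ub_def by linarith
qed

lemma W_ub_le_communication_bound:
  assumes "0 < N" "0 < M" "0 < b" "0 < \<beta>" "\<beta> \<le> \<gamma>"
    and "\<beta> * real M powr (1 - 1 / real N) \<le> real b ^ (N - 1)"
    and "\<And>k. k \<in> {1..N} \<Longrightarrow>
           real b \<le> ((real N / (real N + 1) * \<gamma>) powr (1 / real N) - 1) * real (Is k)"
  shows "W_ub N Is R b \<le> \<gamma> / \<beta> * (real (tensor_size N Is)
           + real N * real (tensor_size N Is) * real R / real M powr (1 - 1 / real N))"
proof -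
  define I c where "I = real (tensor_size N Is)" and "c = (real N / (real N + 1) * \<gamma>) powr (1 / real N)"
  have "real (N + 1) * c ^ N = real N * \<gamma>"
    using powr_inverse_power[of N "real N / (real N + 1) * \<gamma>"] assms(1,4,5) by (simp add: c_def add.commute)
  then have "W_ub N Is R b \<le> I + real N * \<gamma> * I * real R / real b ^ (N - 1)"
    using W_ub_le[of N b c Is R] assms(1,3,7) by (simp add: I_def c_def)
  also have "\<dots> \<le> I + real N * \<gamma> * I * real R / (\<beta> * real M powr (1 - 1 / real N))"
    using assms(2-6) by (intro add_left_mono divide_left_mono) (auto simp: I_def)
  also have "\<dots> \<le> \<gamma> / \<beta> * I + \<gamma> / \<beta> * (real N * I * real R / real M powr (1 - 1 / real N))"
  proof -
    have "1 * I \<le> \<gamma> / \<beta> * I"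
      using assms(4,5) by (intro mult_right_mono) (auto simp: I_def)
    moreover have "real N * \<gamma> * I * real R / (\<beta> * real M powr (1 - 1 / real N))
        = \<gamma> / \<beta> * (real N * I * real R / real M powr (1 - 1 / real N))"
      by (simp add: ac_simps)
    ultimately show ?thesis
      by linarith
  qed
  finally show ?thesis
    by (simp add: I_def distrib_left)
qed

lemma W_lb1_ge:
  assumes "0 < N" "0 < M" "0 < R" "0 < tensor_size N Is" "\<epsilon> < 3 powr (- (2 - 1 / real N))"
    and "real M \<le> ((3 powr (- (2 - 1 / real N)) - \<epsilon>) * real N * real (tensor_size N Is) * real R)
                 powr (real N / (2 * real N - 1))"
  shows "\<epsilon> * (real N * real (tensor_size N Is) * real R / real M powr (1 - 1 / real N)) \<le> W_lb1 N Is R M"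
proof -
  define t T where "t = 3 powr (- (2 - 1 / real N))"
    and "T = real N * real (tensor_size N Is) * real R / real M powr (1 - 1 / real N)"
  have pos: "0 < (t - \<epsilon>) * real N * real (tensor_size N Is) * real R" "0 < real N / (2 * real N - 1)"
    using assms by (auto simp: t_def)
  have "1 / (real N / (2 * real N - 1)) = 1 + (1 - 1 / real N)"
    using assms(1) by (simp add: field_simps)
  then have "real M powr (1 / (real N / (2 * real N - 1))) = real M powr 1 * real M powr (1 - 1 / real N)"
    by (simp only: powr_add)
  then have "real M * real M powr (1 - 1 / real N) = real M powr (1 / (real N / (2 * real N - 1)))"
    using assms(2) by simp
  also have "\<dots> \<le> (t - \<epsilon>) * real N * real (tensor_size N Is) * real R"
    using powr_inverse_le_iff[OF pos(2)] pos(1) assms(6) by (simp add: t_def)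
  finally have "real M \<le> (t - \<epsilon>) * T"
    using assms(2) by (simp add: T_def field_simps)
  moreover have "W_lb1 N Is R M = t * T - real M"
  proof -
    have "t = 1 / 3 powr (2 - 1 / real N)"
      unfolding t_def by (rule powr_minus_divide)
    then show ?thesis
      by (simp add: W_lb1_def T_def)
  qed
  ultimately show ?thesis
    using left_diff_distrib[of t \<epsilon> T] unfolding T_def by linarith
qed

lemma W_lb2_ge:
  assumes "real M \<le> 1 / 2 * ((1 - \<delta>) * real (tensor_size N Is) + (\<Sum>k\<in>{1..N}. real (Is k)) * real R)"
  shows "\<delta> * real (tensor_size N Is) \<le> W_lb2 N Is R M"
  using assms unfolding W_lb2_def sum_distrib_right[symmetric] by (simp add: algebra_simps)

lemma add_le_max_div_min:
  fixes x y u v \<delta> \<epsilon> :: real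
  assumes "0 < \<delta>" "0 < \<epsilon>" "0 \<le> x" "0 \<le> y" "\<delta> * x \<le> u" "\<epsilon> * y \<le> v"
  shows "x + y \<le> 2 / min \<delta> \<epsilon> * max u v"
proof -
  have "min \<delta> \<epsilon> * x \<le> max u v" "min \<delta> \<epsilon> * y \<le> max u v"
    using assms mult_right_mono[of "min \<delta> \<epsilon>" \<delta> x] mult_right_mono[of "min \<delta> \<epsilon>" \<epsilon> y] by auto
  then show ?thesis
    using assms(1,2) by (simp add: field_simps)
qed

lemma max_W_lb_bounds:
  assumes "0 < N" "0 < M" "0 < R" "\<And>k. k \<in> {1..N} \<Longrightarrow> 0 < Is k"
    and "0 < \<delta>" "0 < \<epsilon>" "\<epsilon> < 3 powr (- (2 - 1 / real N))"
    and "real M \<le> 1 / 2 * ((1 - \<delta>) * real (tensor_size N Is)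
           + (\<Sum>k\<in>{1..N}. real (Is k)) * real R)"
    and "real M \<le> ((3 powr (- (2 - 1 / real N)) - \<epsilon>) * real N * real (tensor_size N Is) * real R)
           powr (real N / (2 * real N - 1))"
  shows "real (tensor_size N Is) + real N * real (tensor_size N Is) * real R / real M powr (1 - 1 / real N)
           \<le> 2 / min \<delta> \<epsilon> * max (W_lb1 N Is R M) (W_lb2 N Is R M)"
    and "0 < max (W_lb1 N Is R M) (W_lb2 N Is R M)"
proof -
  have I: "0 < tensor_size N Is"
    using assms(4) by (rule tensor_size_pos)
  have lb2: "\<delta> * real (tensor_size N Is) \<le> W_lb2 N Is R M"
    using assms(8) by (rule W_lb2_ge)
  show "real (tensor_size N Is) + real N * real (tensor_size N Is) * real R / real M powr (1 - 1 / real N)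
      \<le> 2 / min \<delta> \<epsilon> * max (W_lb1 N Is R M) (W_lb2 N Is R M)"
    using add_le_max_div_min[OF assms(5,6) _ _ lb2 W_lb1_ge[OF assms(1-3) I assms(7,9)]]
    by (simp add: max.commute)
  have "0 < \<delta> * real (tensor_size N Is)"
    using assms(5) I by simp
  with lb2 show "0 < max (W_lb1 N Is R M) (W_lb2 N Is R M)"
    by linarith
qed

theorem theorem4:
  fixes N R M :: nat and Is :: "nat \<Rightarrow> nat"
    and \<alpha> \<beta> \<gamma> \<delta> \<epsilon> :: real
  assumes hN: "N \<ge> 2"
    and hIs: "\<And>k. k \<in> {1..N} \<Longrightarrow> Is k > 0"
    and hR: "R > 0" and hM: "M > 0"
    and ha: "0 < \<alpha>" "\<alpha> < 1"
    and hb: "0 < \<beta>" "\<beta> < \<alpha> powr (1 - 1 / real N)"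
    and hg: "0 < \<gamma>" "\<gamma> > 1 + 1 / real N"
    and hd: "0 < \<delta>"
      "\<delta> < 1 + real R * (\<Sum>k\<in>{1..N}. real (Is k)) / real (tensor_size N Is)"
    and he: "0 < \<epsilon>" "\<epsilon> < 3 powr (- (2 - 1 / real N))"
    and hM1: "real M \<ge> (real N * \<alpha> powr (1 / real N) / (1 - \<alpha>)) powr (real N / (real N - 1))"
    and hM2: "real M \<ge> (1 / (\<alpha> powr (1 / real N) - \<beta> powr (1 / (real N - 1)))) ^ N"
    and hM3: "real M \<le> (((real N / (real N + 1) * \<gamma>) powr (1 / real N) - 1) / \<alpha> powr (1 / real N)
                 * real (Min (Is ` {1..N}))) ^ N"
    and hM4: "real M \<le> 1 / 2 * ((1 - \<delta>) * real (tensor_size N Is)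
                 + (\<Sum>k\<in>{1..N}. real (Is k)) * real R)"
    and hM5: "real M \<le> ((3 powr (- (2 - 1 / real N)) - \<epsilon>) * real N * real (tensor_size N Is) * real R)
                 powr (real N / (2 * real N - 1))"
  shows "let b = nat \<lfloor>(\<alpha> * real M) powr (1 / real N)\<rfloor> in
           b \<ge> 1 \<and> b ^ N + N * b \<le> M
         \<and> W_ub N Is R b \<le> \<gamma> / \<beta> * (real (tensor_size N Is)
               + real N * real (tensor_size N Is) * real R / real M powr (1 - 1 / real N))
         \<and> \<gamma> / \<beta> * (real (tensor_size N Is)
               + real N * real (tensor_size N Is) * real R / real M powr (1 - 1 / real N))
             \<le> 2 * \<gamma> / (\<beta> * min \<delta> \<epsilon>) * max (W_lb1 N Is R M) (W_lb2 N Is R M)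
         \<and> max (W_lb1 N Is R M) (W_lb2 N Is R M) > 0"
proof -
  define b where "b = block_size N \<alpha> M"
  define I where "I = real (tensor_size N Is)"
  define T where "T = real N * I * real R / real M powr (1 - 1 / real N)"
  have N: "0 < N"
    using hN by simp
  have b: "1 \<le> b" "\<beta> * real M powr (1 - 1 / real N) \<le> real b ^ (N - 1)"
    using block_size_pow_pred_ge[OF hN ha(1) hb hM2] by (simp_all add: b_def)
  have b_le: "b ^ N + N * b \<le> M"
    using block_size_pow_add_le[OF hN ha hM1] by (simp add: b_def)
  have "1 \<le> real N / (real N + 1) * \<gamma>"
    using hg(2) N by (simp add: field_simps)
  then have c: "0 \<le> (real N / (real N + 1) * \<gamma>) powr (1 / real N) - 1"
    using ge_one_powr_ge_zero by simp
  have b_dim: "real b \<le> ((real N / (real N + 1) * \<gamma>) powr (1 / real N) - 1) * real (Is k)"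
    if "k \<in> {1..N}" for k
    using block_size_le_dim[OF N ha(1) c _ _ hM3] that hIs by (simp add: b_def)
  have "\<alpha> powr (1 - 1 / real N) \<le> 1"
    using N ha by (intro powr_le1) auto
  then have "\<beta> \<le> \<gamma>"
    using hb(2) hg(2) by (smt (verit) divide_nonneg_nonneg of_nat_0_le_iff)
  then have ub: "W_ub N Is R b \<le> \<gamma> / \<beta> * (I + T)"
    using W_ub_le_communication_bound[OF N hM _ hb(1) _ b(2) b_dim] b(1) by (simp add: I_def T_def)
  have lb: "I + T \<le> 2 / min \<delta> \<epsilon> * max (W_lb1 N Is R M) (W_lb2 N Is R M)"
    and max_pos: "0 < max (W_lb1 N Is R M) (W_lb2 N Is R M)"
    using max_W_lb_bounds[OF N hM hR hIs hd(1) he hM4 hM5] by (simp_all add: I_def T_def)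
  from lb have "\<gamma> / \<beta> * (I + T) \<le> \<gamma> / \<beta> * (2 / min \<delta> \<epsilon> * max (W_lb1 N Is R M) (W_lb2 N Is R M))"
    using hb(1) \<open>\<beta> \<le> \<gamma>\<close> by (intro mult_left_mono) auto
  also have "\<dots> = 2 * \<gamma> / (\<beta> * min \<delta> \<epsilon>) * max (W_lb1 N Is R M) (W_lb2 N Is R M)"
    by simp
  finally have "\<gamma> / \<beta> * (I + T) \<le> 2 * \<gamma> / (\<beta> * min \<delta> \<epsilon>) * max (W_lb1 N Is R M) (W_lb2 N Is R M)" .
  with b(1) b_le ub max_pos show ?thesis
    unfolding Let_def block_size_def[symmetric] b_def[symmetric] I_def[symmetric]
    unfolding T_def[symmetric] by blast
qed

end
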